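(* Let $p\ge1$ and let $T_\alpha{}_i^{k_1\cdots k_p}=T_\alpha{}_i^{(k_1\cdots k_p)}$ be constants (indices $i,k_r\in\{0,1,2,3\}$, $\alpha$ ranging over a finite index set) such that \[T_\alpha{}_i^{k_1\cdots k_p}\,a^\alpha_{k_1\cdots k_p}{}_j{}^j=T_\alpha{}_j^{k_1\cdots k_p}\,a^\alpha_{k_1\cdots k_p}{}_i{}^j\] holds identically in the variables $a^\alpha_{i_1\cdots i_{p+2}}$, which are arbitrary and totally symmetric in their lower indices. Then there are constants $S_\alpha^{k_1\cdots k_{p-1}}=S_\alpha^{(k_1\cdots k_{p-1})}$ such that $T_\alpha{}_i^{k_1\cdots k_p}=\delta_i^{(k_1}S_\alpha^{k_2\cdots k_p)}$.
   Context: Indices are raised and lowered with the Minkowski metric $\eta=\mathrm{diag}(-1,1,1,1)$, round brackets denote symmetrization, repeated indices are summed. *)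

theory Defs
  imports Complex_Main "HOL-Library.Multiset" "HOL-Combinatorics.Permutations"
begin

definition idx :: "nat \<Rightarrow> nat list set" where
  "idx n = {ks. length ks = n \<and> set ks \<subseteq> {..<4}}"

text \<open>Minkowski metric eta = diag(-1,1,1,1) (equal to its inverse).\<close>
definition eta :: "nat \<Rightarrow> nat \<Rightarrow> real" where
  "eta i j = (if i = j then (if i = 0 then -1 else 1) else 0)"

definition kdelta :: "nat \<Rightarrow> nat \<Rightarrow> real" where
  "kdelta i j = (if i = j then 1 else 0)"

definition sym_on_idx :: "nat \<Rightarrow> (nat list \<Rightarrow> real) \<Rightarrow> bool" where
  "sym_on_idx n f = (\<forall>xs\<in>idx n. \<forall>ys\<in>idx n. mset xs = mset ys \<longrightarrow> f xs = f ys)"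

text \<open>delta_i^{(k_1} S^{k_2 ... k_p)}: average over all permutations of the p upper indices.\<close>
definition delta_sym :: "nat \<Rightarrow> (nat list \<Rightarrow> real) \<Rightarrow> nat \<Rightarrow> nat list \<Rightarrow> real" where
  "delta_sym p S i ks = (1 / fact p) *
     (\<Sum>\<sigma>\<in>{\<sigma>. \<sigma> permutes {..<p}}.
        kdelta i (ks ! \<sigma> 0) * S (map (\<lambda>r. ks ! \<sigma> r) [1..<p]))"

end

theory Submission
  imports Defs
begin

text \<open>Read a function of multisets of indices as a polynomial in \<open>x\<^sub>0, \<dots>, x\<^sub>3\<close>, and let
  \<open>\<tau>\<^sub>i\<close> be the polynomial whose coefficients are the sums of \<open>T\<^sub>i\<close> over all arrangements of
  the upper indices. Testing the hypothesis on the indicator of a single multiset \<open>N\<close> turns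
  it into \<open>q \<tau>\<^sub>i = x\<^sub>i w\<close>, with \<open>q = \<Sum>j. \<eta>\<^sup>j\<^sup>j x\<^sub>j\<^sup>2\<close> and \<open>w = \<Sum>j. \<eta>\<^sup>j\<^sup>j x\<^sub>j \<tau>\<^sub>j\<close>.
  Multiplication by \<open>q\<close> is injective (look at the highest power of one variable), even
  after setting \<open>x\<^sub>i = 0\<close>; hence \<open>x\<^sub>i\<close> divides \<open>\<tau>\<^sub>i\<close>, and \<open>q (\<tau>\<^sub>i / x\<^sub>i) = w\<close> shows that
  \<open>\<sigma> = \<tau>\<^sub>i / x\<^sub>i\<close> does not depend on \<open>i\<close>. Spreading \<open>\<sigma>\<close> evenly over arrangements gives \<open>S\<close>.\<close>

definition arrangements :: "nat \<Rightarrow> nat multiset \<Rightarrow> nat list set" where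
  "arrangements p K = {ks \<in> idx p. mset ks = K}"

definition sum_arrangements :: "nat \<Rightarrow> (nat list \<Rightarrow> real) \<Rightarrow> nat multiset \<Rightarrow> real" where
  "sum_arrangements p f K = (\<Sum>ks\<in>arrangements p K. f ks)"

lemma finite_idx: "finite (idx n)"
proof -
  have "idx n = {xs. set xs \<subseteq> {..<4} \<and> length xs = n}" by (auto simp: idx_def)
  then show ?thesis using finite_lists_length_eq[of "{..<4::nat}" n] by simp
qed

lemma finite_arrangements [simp]: "finite (arrangements p K)"
  unfolding arrangements_def using finite_idx by simp

lemma finite_support_sum_arrangements: "finite {K. sum_arrangements p f K \<noteq> 0}"
proof (rule finite_subset[OF _ finite_imageI[OF finite_idx]])
  show "{K. sum_arrangements p f K \<noteq> 0} \<subseteq> mset ` idx p"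
    unfolding sum_arrangements_def arrangements_def
    by (auto elim: sum.not_neutral_contains_not_neutral)
qed

lemma card_arrangements_nonzero:
  assumes "ks \<in> idx p"
  shows "card (arrangements p (mset ks)) \<noteq> 0"
proof -
  have "ks \<in> arrangements p (mset ks)" using assms by (simp add: arrangements_def)
  then show ?thesis by auto
qed

lemma sum_arrangements_sym:
  assumes "sym_on_idx p f" and "ks \<in> idx p"
  shows "sum_arrangements p f (mset ks) = real (card (arrangements p (mset ks))) * f ks"
proof -
  have "f ks' = f ks" if "ks' \<in> arrangements p (mset ks)" for ks'
  proof -
    from that have "ks' \<in> idx p" "mset ks' = mset ks" by (simp_all add: arrangements_def)
    with assms show ?thesis unfolding sym_on_idx_def by blast
  qed
  then show ?thesis by (simp add: sum_arrangements_def)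
qed

lemma sum_arrangements_average:
  assumes "arrangements q L \<noteq> {}"
  shows "(\<Sum>ls\<in>arrangements q L. h (mset ls) / card (arrangements q (mset ls))) = h L"
proof -
  have "(\<Sum>ls\<in>arrangements q L. h (mset ls) / card (arrangements q (mset ls)))
      = (\<Sum>ls\<in>arrangements q L. h L / card (arrangements q L))"
    by (intro sum.cong) (auto simp: arrangements_def)
  then show ?thesis using assms by simp
qed

lemma arrangements_remove_nonempty:
  assumes "ks \<in> idx (Suc q)" and "i \<in># mset ks"
  shows "arrangements q (mset ks - {#i#}) \<noteq> {}"
proof -
  have "remove1 i ks \<in> arrangements q (mset ks - {#i#})"
    using assms set_remove1_subset[of i ks]
    by (auto simp: arrangements_def idx_def length_remove1)
  then show ?thesis by blast
qed

lemma sum_arrangements_permute_list: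
  assumes "\<sigma> permutes {..<p}"
  shows "(\<Sum>ks\<in>arrangements p K. F (permute_list \<sigma> ks)) = (\<Sum>ks\<in>arrangements p K. F ks)"
proof (rule sum.reindex_bij_witness[where j = "permute_list \<sigma>" and i = "permute_list (inv \<sigma>)"])
  have inv: "inv \<sigma> permutes {..<p}" using assms by (rule permutes_inv)
  fix ks assume ks: "ks \<in> arrangements p K"
  then have len: "length ks = p" by (simp add: arrangements_def idx_def)
  show "permute_list (inv \<sigma>) (permute_list \<sigma> ks) = ks"
    using permute_list_compose[of "inv \<sigma>" ks \<sigma>] inv len permutes_inv_o(1)[OF assms] by simp
  show "permute_list \<sigma> (permute_list (inv \<sigma>) ks) = ks"
    using permute_list_compose[of \<sigma> ks "inv \<sigma>"] assms len permutes_inv_o(2)[OF assms] by simp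
  have "mset (permute_list \<sigma> ks) = mset ks" "mset (permute_list (inv \<sigma>) ks) = mset ks"
    using assms inv len by (simp_all add: mset_permute_list)
  then show "permute_list \<sigma> ks \<in> arrangements p K" "permute_list (inv \<sigma>) ks \<in> arrangements p K"
    using ks by (auto simp: arrangements_def idx_def dest!: arg_cong[of _ _ set_mset])
qed simp

lemma card_arrangements_mult_sum_permutes:
  assumes ks: "ks \<in> idx p"
  shows "real (card (arrangements p (mset ks))) * (\<Sum>\<sigma>\<in>{\<sigma>. \<sigma> permutes {..<p}}. F (permute_list \<sigma> ks))
       = fact p * (\<Sum>ks'\<in>arrangements p (mset ks). F ks')"
proof -
  let ?P = "{\<sigma>. \<sigma> permutes {..<p}}"
  define G where "G xs = (\<Sum>\<sigma>\<in>?P. F (permute_list \<sigma> xs))" for xs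
  have len: "length ks = p" using ks by (simp add: idx_def)
  have G_const: "G ks' = G ks" if "ks' \<in> arrangements p (mset ks)" for ks'
  proof -
    have "mset ks' = mset ks" using that by (simp add: arrangements_def)
    then obtain \<pi> where \<pi>: "\<pi> permutes {..<p}" "permute_list \<pi> ks = ks'"
      unfolding len[symmetric] by (rule mset_eq_permutation)
    have "G ks = (\<Sum>\<sigma>\<in>?P. F (permute_list (\<pi> \<circ> \<sigma>) ks))"
      unfolding G_def by (rule setum_permutations_compose_left[OF \<pi>(1)])
    also have "\<dots> = G ks'"
      unfolding G_def using \<pi> len by (intro sum.cong refl) (simp add: permute_list_compose)
    finally show ?thesis by simp
  qed
  have "real (card (arrangements p (mset ks))) * G ks = (\<Sum>ks'\<in>arrangements p (mset ks). G ks')"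
    using G_const by simp
  also have "\<dots> = (\<Sum>\<sigma>\<in>?P. \<Sum>ks'\<in>arrangements p (mset ks). F (permute_list \<sigma> ks'))"
    unfolding G_def by (rule sum.swap)
  also have "\<dots> = (\<Sum>\<sigma>\<in>?P. \<Sum>ks'\<in>arrangements p (mset ks). F ks')"
    by (intro sum.cong refl sum_arrangements_permute_list) simp
  also have "\<dots> = fact p * (\<Sum>ks'\<in>arrangements p (mset ks). F ks')"
    by (simp add: card_permutations[of "{..<p}" p])
  finally show ?thesis by (simp add: G_def)
qed

lemma sum_arrangements_Suc_hd_tl:
  assumes "i < 4"
  shows "(\<Sum>ks\<in>arrangements (Suc q) K. kdelta i (hd ks) * g (tl ks))
       = (if i \<in># K then \<Sum>ls\<in>arrangements q (K - {#i#}). g ls else 0)"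
proof -
  have "(\<Sum>ks\<in>arrangements (Suc q) K. kdelta i (hd ks) * g (tl ks))
      = (\<Sum>ks\<in>arrangements (Suc q) K. if hd ks = i then g (tl ks) else 0)"
    by (intro sum.cong) (auto simp: kdelta_def)
  also have "\<dots> = (\<Sum>ks\<in>{ks \<in> arrangements (Suc q) K. hd ks = i}. g (tl ks))"
    by (simp add: sum.inter_filter)
  also have "{ks \<in> arrangements (Suc q) K. hd ks = i}
      = (if i \<in># K then Cons i ` arrangements q (K - {#i#}) else {})"
  proof (cases "i \<in># K")
    case True
    have "ks \<in> Cons i ` arrangements q (K - {#i#})"
      if "ks \<in> arrangements (Suc q) K" "hd ks = i" for ks
      using that by (cases ks) (auto simp: arrangements_def idx_def)
    moreover have "i # ls \<in> arrangements (Suc q) K" if "ls \<in> arrangements q (K - {#i#})" for ls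
      using that True assms by (auto simp: arrangements_def idx_def)
    ultimately show ?thesis using True by auto
  next
    case False
    have "i \<in># K" if "ks \<in> arrangements (Suc q) K" "hd ks = i" for ks
      using that by (cases ks) (auto simp: arrangements_def idx_def)
    with False show ?thesis by auto
  qed
  finally show ?thesis by (simp add: sum.reindex)
qed

lemma delta_sym_arrangements:
  assumes ks: "ks \<in> idx (Suc q)" and "i < 4"
  shows "delta_sym (Suc q) S i ks
       = (if i \<in># mset ks then \<Sum>ls\<in>arrangements q (mset ks - {#i#}). S ls else 0)
         / card (arrangements (Suc q) (mset ks))"
proof -
  let ?A = "arrangements (Suc q) (mset ks)"
  define F where "F xs = kdelta i (hd xs) * S (tl xs)" for xs
  have len: "length ks = Suc q" using ks by (simp add: idx_def)
  have "delta_sym (Suc q) S i ks = (\<Sum>\<sigma>\<in>{\<sigma>. \<sigma> permutes {..<Suc q}}. F (permute_list \<sigma> ks)) / fact (Suc q)"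
    unfolding delta_sym_def F_def using len
    by (simp add: permute_list_def upt_conv_Cons map_tl[symmetric] del: upt_Suc)
  also have "\<dots> = (\<Sum>ks'\<in>?A. F ks') / card ?A"
    using card_arrangements_mult_sum_permutes[OF ks, of F] card_arrangements_nonzero[OF ks]
    by (simp add: field_simps del: fact_Suc)
  finally show ?thesis
    unfolding F_def sum_arrangements_Suc_hd_tl[OF \<open>i < 4\<close>] .
qed

text \<open>Reading \<open>D\<close> as the polynomial \<open>\<Sum>K. D K x\<^sup>K\<close>, \<open>mshift X D\<close> is \<open>x\<^sup>X D\<close> and
  \<open>eta_mul D\<close> is \<open>q D\<close>.\<close>

definition mshift :: "nat multiset \<Rightarrow> (nat multiset \<Rightarrow> real) \<Rightarrow> nat multiset \<Rightarrow> real" where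
  "mshift X D N = (if X \<subseteq># N then D (N - X) else 0)"

definition eta_mul :: "(nat multiset \<Rightarrow> real) \<Rightarrow> nat multiset \<Rightarrow> real" where
  "eta_mul D N = (\<Sum>j<4. eta j j * mshift {#j, j#} D N)"

lemma mshift_add_mset [simp]: "mshift (add_mset i X) D (add_mset i M) = mshift X D M"
  by (simp add: mshift_def)

lemma mshift_add_mset_arg:
  assumes "\<And>K. i \<notin># K \<Longrightarrow> D K = 0"
  shows "mshift X (\<lambda>L. D (add_mset i L)) M = mshift X D (add_mset i M)"
proof (cases "X \<subseteq># M")
  case True
  then have "add_mset i M - X = add_mset i (M - X)"
    by (metis add_mset_add_single subset_mset.diff_add_assoc2)
  with True show ?thesis
    by (simp add: mshift_def)
      (metis add_mset_remove_trivial diff_subset_eq_self subset_mset.dual_order.trans)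
next
  case False
  have "i \<notin># add_mset i M - X" if "X \<subseteq># add_mset i M"
    using that False
    by (metis add_mset_remove_trivial single_subset_iff subset_mset.diff_add subset_mset.le_add_diff)
  with False show ?thesis by (simp add: mshift_def assms)
qed

lemma eta_mul_diff: "eta_mul (\<lambda>K. D K - E K) N = eta_mul D N - eta_mul E N"
  unfolding eta_mul_def sum_subtractf[symmetric]
  by (intro sum.cong) (auto simp: mshift_def right_diff_distrib)

lemma eta_mul_cancel:
  assumes fin: "finite {K. D K \<noteq> 0}" and j: "j < 4"
    and eq: "\<And>K. D K \<noteq> 0 \<Longrightarrow> eta_mul D (K + {#j, j#}) = 0"
  shows "D K = 0"
proof (rule ccontr)
  assume "D K \<noteq> 0"
  then have supp_ne: "{K. D K \<noteq> 0} \<noteq> {}" by blast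
  define m where "m = Max ((\<lambda>K. count K j) ` {K. D K \<noteq> 0})"
  have "m \<in> (\<lambda>K. count K j) ` {K. D K \<noteq> 0}"
    unfolding m_def using fin supp_ne by (intro Max_in) auto
  then obtain K0 where K0: "D K0 \<noteq> 0" "count K0 j = m" by auto
  have K0_max: "count K' j \<le> count K0 j" if "D K' \<noteq> 0" for K'
    using fin that unfolding K0(2) m_def by (intro Max_ge) auto
  \<comment> \<open>the coefficient of the leading power of \<open>x\<^sub>j\<close> in \<open>q D\<close>\<close>
  have "eta_mul D (K0 + {#j, j#}) = eta j j * D K0"
    unfolding eta_mul_def
  proof (subst sum.remove[of _ j])
    have "mshift {#l, l#} D (K0 + {#j, j#}) = 0" if "l \<noteq> j" for l
      using K0_max[of "K0 + {#j, j#} - {#l, l#}"] that by (auto simp: mshift_def)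
    then show "eta j j * mshift {#j, j#} D (K0 + {#j, j#}) +
      (\<Sum>l\<in>{..<4} - {j}. eta l l * mshift {#l, l#} D (K0 + {#j, j#})) = eta j j * D K0"
      by (simp add: mshift_def)
  qed (use j in auto)
  with eq[OF K0(1)] K0(1) show False by (simp add: eta_def split: if_splits)
qed

lemma sum_idx_indicator:
  "(\<Sum>ks\<in>idx p. f ks * (if mset (ks @ xs) = N then 1 else 0))
     = mshift (mset xs) (sum_arrangements p f) N"
proof -
  have "(\<Sum>ks\<in>idx p. f ks * (if mset (ks @ xs) = N then 1 else 0))
      = sum f {ks \<in> idx p. mset ks + mset xs = N}"
    using finite_idx by (simp add: sum.inter_filter[symmetric] if_distrib cong: if_cong)
  also have "{ks \<in> idx p. mset ks + mset xs = N}
      = (if mset xs \<subseteq># N then arrangements p (N - mset xs) else {})"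
    by (auto simp: arrangements_def)
  finally show ?thesis by (simp add: mshift_def sum_arrangements_def)
qed

lemma sum_contraction_indicator:
  fixes T :: "'a::finite \<Rightarrow> nat \<Rightarrow> nat list \<Rightarrow> real"
  shows "(\<Sum>\<beta>\<in>UNIV. \<Sum>ks\<in>idx p. \<Sum>j<4. \<Sum>l<4.
            T \<beta> (f j) ks * (eta j l * (if \<beta> = \<alpha> \<and> mset (ks @ [g j, l]) = N then 1 else 0)))
       = (\<Sum>j<4. eta j j * mshift {#g j, j#} (sum_arrangements p (T \<alpha> (f j))) N)"
proof -
  have "(\<Sum>\<beta>\<in>UNIV. \<Sum>ks\<in>idx p. \<Sum>j<4. \<Sum>l<4.
            T \<beta> (f j) ks * (eta j l * (if \<beta> = \<alpha> \<and> mset (ks @ [g j, l]) = N then 1 else 0)))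
      = (\<Sum>ks\<in>idx p. \<Sum>j<4. \<Sum>l<4.
            T \<alpha> (f j) ks * (eta j l * (if mset (ks @ [g j, l]) = N then 1 else 0)))"
    by (subst sum.mono_neutral_right[of UNIV "{\<alpha>}"]) auto
  also have "\<dots> = (\<Sum>ks\<in>idx p. \<Sum>j<4. eta j j * (T \<alpha> (f j) ks * (if mset (ks @ [g j, j]) = N then 1 else 0)))"
  proof (intro sum.cong refl)
    fix ks j assume "j \<in> {..<4::nat}"
    then show "(\<Sum>l<4. T \<alpha> (f j) ks * (eta j l * (if mset (ks @ [g j, l]) = N then 1 else 0)))
      = eta j j * (T \<alpha> (f j) ks * (if mset (ks @ [g j, j]) = N then 1 else 0))"
      by (subst sum.mono_neutral_right[of "{..<4}" "{j}"]) (auto simp: eta_def)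
  qed
  also have "\<dots> = (\<Sum>j<4. eta j j * (\<Sum>ks\<in>idx p. T \<alpha> (f j) ks * (if mset (ks @ [g j, j]) = N then 1 else 0)))"
    by (subst sum.swap) (simp add: sum_distrib_left)
  finally show ?thesis
    by (simp only: sum_idx_indicator mult.commute[of _ "T \<alpha> _ _"]) simp
qed

lemma hypothesis_eta_mul_eq:
  fixes T :: "'a::finite \<Rightarrow> nat \<Rightarrow> nat list \<Rightarrow> real"
  assumes hyp: "\<forall>a :: 'a \<Rightarrow> nat list \<Rightarrow> real. (\<forall>\<alpha>. sym_on_idx (p + 2) (a \<alpha>)) \<longrightarrow>
          (\<forall>i<4.
            (\<Sum>\<alpha>\<in>UNIV. \<Sum>ks\<in>idx p. \<Sum>j<4. \<Sum>l<4. T \<alpha> i ks * (eta j l * a \<alpha> (ks @ [j, l])))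
          = (\<Sum>\<alpha>\<in>UNIV. \<Sum>ks\<in>idx p. \<Sum>j<4. \<Sum>l<4. T \<alpha> j ks * (eta j l * a \<alpha> (ks @ [i, l]))))"
    and "i < 4"
  shows "eta_mul (sum_arrangements p (T \<alpha> i)) N
       = (\<Sum>j<4. eta j j * mshift {#i, j#} (sum_arrangements p (T \<alpha> j)) N)"
  using hyp[rule_format, of "\<lambda>\<beta> M. if \<beta> = \<alpha> \<and> mset M = N then 1 else 0" i] \<open>i < 4\<close>
    sum_contraction_indicator[where T = T and f = "\<lambda>j. i" and g = "\<lambda>j. j"]
    sum_contraction_indicator[where T = T and f = "\<lambda>j. j" and g = "\<lambda>j. i"]
  by (simp add: eta_mul_def sym_on_idx_def)

context
  fixes \<tau> :: "nat \<Rightarrow> nat multiset \<Rightarrow> real"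
  assumes finite_support: "\<And>i. finite {K. \<tau> i K \<noteq> 0}"
    and eta_mul_eq: "\<And>i N. i < 4 \<Longrightarrow> eta_mul (\<tau> i) N = (\<Sum>j<4. eta j j * mshift {#i, j#} (\<tau> j) N)"
begin

lemma vanishes_if_not_in:
  assumes "i < 4" and "i \<notin># K"
  shows "\<tau> i K = 0"
proof -
  \<comment> \<open>\<open>q\<close> restricted to \<open>x\<^sub>i = 0\<close> still contains \<open>x\<^sub>j\<^sup>2\<close>\<close>
  define j :: nat where "j = (if i = 0 then 1 else 0)"
  define D where "D K = (if i \<in># K then 0 else \<tau> i K)" for K
  have "D K = 0"
  proof (rule eta_mul_cancel)
    show "finite {K. D K \<noteq> 0}"
      using finite_support[of i] by (rule rev_finite_subset) (auto simp: D_def)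
    show "j < 4" by (simp add: j_def)
  next
    fix K assume "D K \<noteq> 0"
    then have N: "i \<notin># K + {#j, j#}" by (auto simp: D_def j_def split: if_splits)
    then have notin: "i \<notin># K + {#j, j#} - {#l, l#}" for l
      by (meson in_diffD)
    have "eta_mul D (K + {#j, j#}) = eta_mul (\<tau> i) (K + {#j, j#})"
      unfolding eta_mul_def mshift_def D_def by (rule sum.cong[OF refl]) (simp only: notin if_False)
    also have "\<dots> = 0"
    proof -
      have "\<not> {#i, l#} \<subseteq># K + {#j, j#}" for l
        using N mset_subset_eqD[of "{#i, l#}" "K + {#j, j#}" i] by auto
      then show ?thesis by (simp add: eta_mul_eq[OF \<open>i < 4\<close>] mshift_def)
    qed
    finally show "eta_mul D (K + {#j, j#}) = 0" .
  qed
  with assms show ?thesis by (simp add: D_def)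
qed

lemma eta_mul_quotient:
  assumes "i < 4"
  shows "eta_mul (\<lambda>L. \<tau> i (add_mset i L)) M = (\<Sum>j<4. eta j j * mshift {#j#} (\<tau> j) M)"
proof -
  have "eta_mul (\<lambda>L. \<tau> i (add_mset i L)) M = eta_mul (\<tau> i) (add_mset i M)"
    unfolding eta_mul_def using vanishes_if_not_in[OF assms]
    by (simp add: mshift_add_mset_arg)
  also have "\<dots> = (\<Sum>j<4. eta j j * mshift {#j#} (\<tau> j) M)"
    by (simp add: eta_mul_eq[OF assms])
  finally show ?thesis .
qed

lemma quotient_independent_of_index:
  assumes "i < 4" and "k < 4"
  shows "\<tau> i (add_mset i L) = \<tau> k (add_mset k L)"
proof -
  define D where "D L = \<tau> i (add_mset i L) - \<tau> k (add_mset k L)" for L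
  have "D L = 0"
  proof (rule eta_mul_cancel[where j = 0])
    have "finite (add_mset l -` {K. \<tau> l K \<noteq> 0})" for l
      by (rule finite_vimageI[OF finite_support]) (simp add: inj_def)
    then have "finite (add_mset i -` {K. \<tau> i K \<noteq> 0} \<union> add_mset k -` {K. \<tau> k K \<noteq> 0})"
      by blast
    then show "finite {K. D K \<noteq> 0}"
      by (rule rev_finite_subset) (force simp: D_def)
    show "eta_mul D (K + {#0, 0#}) = 0" for K
      unfolding D_def eta_mul_diff using eta_mul_quotient assms by simp
  qed simp
  then show ?thesis by (simp add: D_def)
qed

lemma delta_sym_quotient:
  assumes "ks \<in> idx (Suc q)" and "i < 4"
  shows "\<tau> i (mset ks) / card (arrangements (Suc q) (mset ks))
       = delta_sym (Suc q) (\<lambda>ls. \<tau> 0 (add_mset 0 (mset ls)) / card (arrangements q (mset ls))) i ks"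
proof (cases "i \<in># mset ks")
  case True
  let ?L = "mset ks - {#i#}"
  have "arrangements q ?L \<noteq> {}"
    using assms(1) True by (rule arrangements_remove_nonempty)
  then have "(\<Sum>ls\<in>arrangements q ?L. \<tau> 0 (add_mset 0 (mset ls)) / card (arrangements q (mset ls)))
      = \<tau> 0 (add_mset 0 ?L)"
    by (rule sum_arrangements_average)
  also have "\<dots> = \<tau> i (add_mset i ?L)"
    using assms(2) by (intro quotient_independent_of_index) simp_all
  finally show ?thesis
    using True by (simp add: delta_sym_arrangements[OF assms])
next
  case False
  then show ?thesis
    using vanishes_if_not_in[OF assms(2) False] by (simp add: delta_sym_arrangements[OF assms])
qed

end

theorem proposition3p1:
  fixes p :: nat and T :: "'a::finite \<Rightarrow> nat \<Rightarrow> nat list \<Rightarrow> real"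
  assumes "p \<ge> 1"
    and "\<forall>\<alpha>. \<forall>i<4. sym_on_idx p (T \<alpha> i)"
    and "\<forall>a :: 'a \<Rightarrow> nat list \<Rightarrow> real. (\<forall>\<alpha>. sym_on_idx (p + 2) (a \<alpha>)) \<longrightarrow>
          (\<forall>i<4.
            (\<Sum>\<alpha>\<in>UNIV. \<Sum>ks\<in>idx p. \<Sum>j<4. \<Sum>l<4. T \<alpha> i ks * (eta j l * a \<alpha> (ks @ [j, l])))
          = (\<Sum>\<alpha>\<in>UNIV. \<Sum>ks\<in>idx p. \<Sum>j<4. \<Sum>l<4. T \<alpha> j ks * (eta j l * a \<alpha> (ks @ [i, l]))))"
  shows "\<exists>S :: 'a \<Rightarrow> nat list \<Rightarrow> real.
           (\<forall>\<alpha>. sym_on_idx (p - 1) (S \<alpha>)) \<and>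
           (\<forall>\<alpha>. \<forall>i<4. \<forall>ks\<in>idx p. T \<alpha> i ks = delta_sym p (S \<alpha>) i ks)"
proof -
  obtain q where p: "p = Suc q" using assms(1) by (cases p) auto
  define \<tau> where "\<tau> \<alpha> i = sum_arrangements p (T \<alpha> i)" for \<alpha> i
  have fin: "\<And>i. finite {K. \<tau> \<alpha> i K \<noteq> 0}" for \<alpha>
    unfolding \<tau>_def by (rule finite_support_sum_arrangements)
  have eq: "\<And>i N. i < 4 \<Longrightarrow> eta_mul (\<tau> \<alpha> i) N = (\<Sum>j<4. eta j j * mshift {#i, j#} (\<tau> \<alpha> j) N)"
    for \<alpha>
    unfolding \<tau>_def by (rule hypothesis_eta_mul_eq[OF assms(3)])
  define S where "S \<alpha> = (\<lambda>ls. \<tau> \<alpha> 0 (add_mset 0 (mset ls)) / card (arrangements q (mset ls)))"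
    for \<alpha>
  have "T \<alpha> i ks = delta_sym p (S \<alpha>) i ks" if "i < 4" and ks: "ks \<in> idx p" for \<alpha> i ks
  proof -
    have "T \<alpha> i ks = \<tau> \<alpha> i (mset ks) / card (arrangements p (mset ks))"
      using sum_arrangements_sym[OF assms(2)[rule_format, OF \<open>i < 4\<close>] ks] card_arrangements_nonzero[OF ks]
      by (simp add: \<tau>_def)
    also have "\<dots> = delta_sym p (S \<alpha>) i ks"
      using ks \<open>i < 4\<close> unfolding p S_def by (intro delta_sym_quotient[OF fin eq]) simp_all
    finally show ?thesis .
  qed
  moreover have "sym_on_idx (p - 1) (S \<alpha>)" for \<alpha>
    by (simp add: sym_on_idx_def S_def)
  ultimately show ?thesis by blast
qed

end
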